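(* Let $\lambda_1>\lambda_2>\dots>\lambda_n$ be integers (a regular dominant integral weight $\lambda$). An integer point $A$ of the Gelfand–Tsetlin polytope $GT_\lambda$ is a vertex of $GT_\lambda$ if and only if for every $1\le i\le n-1$ and $1\le j\le n-i$ the entry $A_{i,j}$ is equal to at least one of $A_{i-1,j}$ and $A_{i-1,j+1}$.
   Context: $GT_\lambda$ is the polytope in $\mathbb R^{n(n+1)/2}$, with coordinates $A_{i,j}$ for $0\le i\le n-1$, $1\le j\le n-i$, defined by $A_{0,j}=\lambda_j$ for all $j$ and $A_{i,j}\ge A_{i+1,j}\ge A_{i,j+1}$ for all $0\le i\le n-2$, $1\le j\le n-i-1$. *)

theory Defs
  imports "HOL-Analysis.Analysis"
begin

text \<open>Points of R^{n(n+1)/2} are encoded as functions A :: nat => nat => real, where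
  only the coordinates A i j with i < n and 1 <= j <= n - i are genuine; all other
  entries are required to be 0 (so the set is an affine copy of the polytope).\<close>

definition gt_index :: "nat \<Rightarrow> nat \<Rightarrow> nat \<Rightarrow> bool" where
  "gt_index n i j \<longleftrightarrow> i < n \<and> 1 \<le> j \<and> j \<le> n - i"

definition GT :: "nat \<Rightarrow> (nat \<Rightarrow> int) \<Rightarrow> (nat \<Rightarrow> nat \<Rightarrow> real) set" where
  "GT n lam = {A.
     (\<forall>i j. \<not> gt_index n i j \<longrightarrow> A i j = 0) \<and>
     (\<forall>j. 1 \<le> j \<and> j \<le> n \<longrightarrow> A 0 j = real_of_int (lam j)) \<and>
     (\<forall>i j. i + 2 \<le> n \<and> 1 \<le> j \<and> j + 1 \<le> n - i \<longrightarrow>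
        A i j \<ge> A (i+1) j \<and> A (i+1) j \<ge> A i (j+1))}"

definition is_vertex :: "(nat \<Rightarrow> nat \<Rightarrow> real) set \<Rightarrow> (nat \<Rightarrow> nat \<Rightarrow> real) \<Rightarrow> bool" where
  "is_vertex P A \<longleftrightarrow> A \<in> P \<and>
     \<not> (\<exists>B\<in>P. \<exists>C\<in>P. \<exists>t::real. B \<noteq> C \<and> 0 < t \<and> t < 1 \<and>
          A = (\<lambda>i j. t * B i j + (1 - t) * C i j))"

end

theory Submission
  imports Defs
begin

text \<open>If every entry below the top row equals one of its two upper neighbours, then in a
  representation A = tB + (1-t)C each entry of A is extremal among the corresponding entries
  of B and C, so row by row B and C agree with A. Conversely, if A i j lies strictly between
  its upper neighbours, let S be the set of entries of the downward cone of (i,j) that equal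
  A i j. By integrality two unequal neighbouring entries differ by at least 1, and S contains
  either both or neither of two equal neighbours; hence moving S up or down by 1/2 stays
  inside the polytope, and A is the midpoint of the two moved points.\<close>

lemma GT_column_antimono:
  assumes "A \<in> GT n lam" "1 \<le> l" "k' + l \<le> n" "k \<le> k'"
  shows "A k' l \<le> A k l"
  using assms(4,3)
proof (induction k' rule: dec_induct)
  case (step m)
  have "A (m+1) l \<le> A m l"
    using assms(1,2) step.prems unfolding GT_def by auto
  with step show ?case by simp
qed simp

lemma GT_diagonal_mono:
  assumes "A \<in> GT n lam" "1 \<le> l" "k + d + l \<le> n"
  shows "A k (l + d) \<le> A (k + d) l"
  using assms(3)
proof (induction d arbitrary: k)
  case (Suc d)
  have "A k (l+d+1) \<le> A (k+1) (l+d)"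
    using assms(1,2) Suc.prems unfolding GT_def by auto
  moreover have "A (k+1) (l+d) \<le> A (k+1+d) l"
    using Suc.IH[of "k+1"] Suc.prems by simp
  ultimately show ?case by simp
qed simp

lemma convex_combination_eq_if_extreme:
  fixes a b c t :: real
  assumes "b \<le> a \<and> c \<le> a \<or> a \<le> b \<and> a \<le> c" "a = t * b + (1 - t) * c" "0 < t" "t < 1"
  shows "b = a \<and> c = a"
proof -
  have sum0: "t * (a - b) + (1 - t) * (a - c) = 0"
    using assms(2) by (simp add: algebra_simps)
  from assms(1) have "t * (a - b) = 0 \<and> (1 - t) * (a - c) = 0"
  proof
    assume "b \<le> a \<and> c \<le> a"
    then have "t * (a - b) \<ge> 0" "(1 - t) * (a - c) \<ge> 0" using assms(3,4) by auto
    with sum0 show ?thesis by linarith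
  next
    assume "a \<le> b \<and> a \<le> c"
    then have "t * (a - b) \<le> 0" "(1 - t) * (a - c) \<le> 0"
      using assms(3,4) by (auto simp: mult_nonneg_nonpos)
    with sum0 show ?thesis by linarith
  qed
  then show ?thesis using assms(3,4) by auto
qed

lemma Ints_le_add_shift:
  fixes x y a b :: real
  assumes "y \<le> x" "x \<in> \<int>" "y \<in> \<int>" "x = y \<Longrightarrow> a = b" "\<bar>a\<bar> \<le> 1/2" "\<bar>b\<bar> \<le> 1/2"
  shows "y + b \<le> x + a"
proof (cases "x = y")
  case False
  obtain u w where "x = of_int u" "y = of_int w"
    using assms(2,3) Ints_cases by metis
  with False assms(1) have "y + 1 \<le> x" by simp
  with assms(5,6) show ?thesis by linarith
qed (use assms in simp)

lemma GT_rows_eq_if_tight: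
  assumes B: "B \<in> GT n lam" and C: "C \<in> GT n lam" and t: "0 < t" "t < 1"
    and A: "\<And>i j. A i j = t * B i j + (1 - t) * C i j"
    and tight: "\<forall>i j. 1 \<le> i \<and> i \<le> n - 1 \<and> 1 \<le> j \<and> j \<le> n - i \<longrightarrow>
        A i j = A (i - 1) j \<or> A i j = A (i - 1) (j + 1)"
  shows "B i j = A i j \<and> C i j = A i j"
proof (induction i arbitrary: j)
  case 0
  have "B 0 j = C 0 j" using B C unfolding GT_def gt_index_def by (cases "1 \<le> j \<and> j \<le> n") auto
  then show ?case using A[of 0 j] by (simp add: algebra_simps)
next
  case (Suc i)
  show ?case
  proof (cases "gt_index n (Suc i) j")
    case False
    then have "B (Suc i) j = 0" "C (Suc i) j = 0" using B C unfolding GT_def by auto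
    then show ?thesis using A[of "Suc i" j] by simp
  next
    case True
    then have idx: "1 \<le> j" "j \<le> n - Suc i" "Suc i < n" unfolding gt_index_def by auto
    have "B (Suc i) j \<le> B i j \<and> B i (j+1) \<le> B (Suc i) j"
      "C (Suc i) j \<le> C i j \<and> C i (j+1) \<le> C (Suc i) j"
      using B C idx unfolding GT_def by auto
    moreover have "A (Suc i) j = A i j \<or> A (Suc i) j = A i (j + 1)"
      using tight[rule_format, of "Suc i" j] idx by simp
    ultimately have "B (Suc i) j \<le> A (Suc i) j \<and> C (Suc i) j \<le> A (Suc i) j
        \<or> A (Suc i) j \<le> B (Suc i) j \<and> A (Suc i) j \<le> C (Suc i) j"
      using Suc.IH by fastforce
    then show ?thesis using convex_combination_eq_if_extreme A t by blast
  qed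
qed

lemma is_vertex_GT_if_tight:
  assumes "A \<in> GT n lam"
    and "\<forall>i j. 1 \<le> i \<and> i \<le> n - 1 \<and> 1 \<le> j \<and> j \<le> n - i \<longrightarrow>
        A i j = A (i - 1) j \<or> A i j = A (i - 1) (j + 1)"
  shows "is_vertex (GT n lam) A"
  unfolding is_vertex_def
proof (intro conjI notI)
  assume "\<exists>B\<in>GT n lam. \<exists>C\<in>GT n lam. \<exists>t::real. B \<noteq> C \<and> 0 < t \<and> t < 1 \<and>
          A = (\<lambda>i j. t * B i j + (1 - t) * C i j)"
  then obtain B C t where "B \<in> GT n lam" "C \<in> GT n lam" "B \<noteq> C" "0 < t" "t < 1"
    and "A = (\<lambda>i j. t * B i j + (1 - t) * C i j)" by blast
  with GT_rows_eq_if_tight[OF _ _ _ _ _ assms(2)] have "B i j = C i j" for i j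
    by (metis (no_types, lifting))
  then show False using \<open>B \<noteq> C\<close> by blast
qed (fact assms(1))

lemma GT_shift:
  assumes A: "A \<in> GT n lam" and integral: "\<forall>i j. A i j \<in> \<int>" and s: "\<bar>s\<bar> \<le> 1/2"
    and S_inside: "\<And>k l. S k l \<Longrightarrow> gt_index n k l \<and> 0 < k"
    and S_vertical: "\<And>p q. p + 2 \<le> n \<Longrightarrow> 1 \<le> q \<Longrightarrow> q + 1 \<le> n - p \<Longrightarrow>
        A p q = A (p+1) q \<Longrightarrow> S p q = S (p+1) q"
    and S_diagonal: "\<And>p q. p + 2 \<le> n \<Longrightarrow> 1 \<le> q \<Longrightarrow> q + 1 \<le> n - p \<Longrightarrow>
        A (p+1) q = A p (q+1) \<Longrightarrow> S (p+1) q = S p (q+1)"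
  shows "(\<lambda>k l. A k l + (if S k l then s else 0)) \<in> GT n lam"
proof -
  define d where "d k l = (if S k l then s else 0)" for k l
  have d_le: "\<bar>d k l\<bar> \<le> 1/2" for k l using s unfolding d_def by simp
  have "A (p+1) q + d (p+1) q \<le> A p q + d p q \<and> A p (q+1) + d p (q+1) \<le> A (p+1) q + d (p+1) q"
    if h: "p + 2 \<le> n" "1 \<le> q" "q + 1 \<le> n - p" for p q
  proof -
    have "A (p+1) q \<le> A p q" "A p (q+1) \<le> A (p+1) q" using A h unfolding GT_def by auto
    then show ?thesis
      using Ints_le_add_shift integral d_le S_vertical[OF h] S_diagonal[OF h]
      unfolding d_def by presburger
  qed
  moreover have "d k l = 0" if "\<not> gt_index n k l \<or> k = 0" for k l
    using S_inside[of k l] that unfolding d_def by auto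
  ultimately show ?thesis
    using A unfolding GT_def d_def[symmetric] by auto
qed

definition flat_cone :: "nat \<Rightarrow> (nat \<Rightarrow> nat \<Rightarrow> real) \<Rightarrow> nat \<Rightarrow> nat \<Rightarrow> nat \<Rightarrow> nat \<Rightarrow> bool" where
  "flat_cone n A i j k l \<longleftrightarrow>
     gt_index n k l \<and> i \<le> k \<and> l \<le> j \<and> j \<le> l + (k - i) \<and> A k l = A i j"

context
  fixes n lam A i j
  assumes A: "A \<in> GT n lam"
    and ij: "1 \<le> i" "i \<le> n - 1" "1 \<le> j" "j \<le> n - i"
    and strict_left: "A i j < A (i - 1) j" and strict_right: "A (i - 1) (j + 1) < A i j"
begin

lemma flat_cone_vertical:
  assumes h: "p + 2 \<le> n" "1 \<le> q" "q + 1 \<le> n - p" and eq: "A p q = A (p+1) q"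
  shows "flat_cone n A i j p q = flat_cone n A i j (p+1) q"
proof
  assume cone: "flat_cone n A i j (p+1) q"
  then have a: "i \<le> p + 1" "q \<le> j" "j \<le> q + (p + 1 - i)" "A p q = A i j"
    using eq unfolding flat_cone_def by auto
  have "i \<le> p"
  proof (rule ccontr)
    assume "\<not> i \<le> p"
    then have "p = i - 1" "q = j" using a by auto
    then show False using a strict_left by simp
  qed
  moreover have "j \<le> q + (p - i)"
  proof (rule ccontr)
    assume "\<not> j \<le> q + (p - i)"
    then have "j = q + (p - (i - 1))" using a \<open>i \<le> p\<close> ij(1) by auto
    moreover have "A (i-1) (q + (p - (i-1))) \<le> A ((i-1) + (p - (i-1))) q"
      using GT_diagonal_mono[OF A h(2), of "i-1" "p - (i-1)"] h \<open>i \<le> p\<close> ij by simp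
    ultimately show False using \<open>i \<le> p\<close> ij(1) a strict_left by simp
  qed
  ultimately show "flat_cone n A i j p q"
    using a h unfolding flat_cone_def gt_index_def by auto
qed (use h eq in \<open>auto simp: flat_cone_def gt_index_def\<close>)

lemma flat_cone_diagonal:
  assumes h: "p + 2 \<le> n" "1 \<le> q" "q + 1 \<le> n - p" and eq: "A (p+1) q = A p (q+1)"
  shows "flat_cone n A i j (p+1) q = flat_cone n A i j p (q+1)"
proof
  assume cone: "flat_cone n A i j (p+1) q"
  then have a: "i \<le> p + 1" "q \<le> j" "j \<le> q + (p + 1 - i)" "A p (q+1) = A i j"
    using eq unfolding flat_cone_def by auto
  have "i \<le> p"
  proof (rule ccontr)
    assume "\<not> i \<le> p"
    then have "p = i - 1" "q = j" using a by auto
    then show False using a strict_right by simp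
  qed
  moreover have "q + 1 \<le> j"
  proof (rule ccontr)
    assume "\<not> q + 1 \<le> j"
    then have "q = j" using a by auto
    moreover have "A p (j+1) \<le> A (i-1) (j+1)"
      using GT_column_antimono[OF A, of "j+1" p "i-1"] h \<open>q = j\<close> \<open>i \<le> p\<close> by simp
    ultimately show False using a strict_right by simp
  qed
  ultimately show "flat_cone n A i j p (q+1)"
    using a h unfolding flat_cone_def gt_index_def by auto
qed (use h eq in \<open>auto simp: flat_cone_def gt_index_def\<close>)

lemma not_is_vertex_GT_if_strict:
  assumes integral: "\<forall>i j. A i j \<in> \<int>"
  shows "\<not> is_vertex (GT n lam) A"
proof
  assume vertex: "is_vertex (GT n lam) A"
  let ?S = "flat_cone n A i j"
  define B where "B = (\<lambda>k l. A k l + (if ?S k l then 1/2 else 0))"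
  define C where "C = (\<lambda>k l. A k l + (if ?S k l then - (1/2) else 0))"
  have S_inside: "?S k l \<Longrightarrow> gt_index n k l \<and> 0 < k" for k l
    using ij(1) unfolding flat_cone_def by auto
  have "B \<in> GT n lam" "C \<in> GT n lam"
    unfolding B_def C_def
    by (rule GT_shift[where S = ?S, OF A integral _ S_inside flat_cone_vertical flat_cone_diagonal];
        simp)+
  moreover have "?S i j" using ij unfolding flat_cone_def gt_index_def by auto
  then have "B i j \<noteq> C i j" unfolding B_def C_def by simp
  then have "B \<noteq> C" by auto
  moreover have "A = (\<lambda>k l. (1/2) * B k l + (1 - 1/2) * C k l)"
    unfolding B_def C_def fun_eq_iff by (simp add: field_simps)
  ultimately have "\<exists>t::real. B \<noteq> C \<and> 0 < t \<and> t < 1 \<and> A = (\<lambda>k l. t * B k l + (1 - t) * C k l)"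
    by (intro exI[of _ "1/2"]) simp
  then show False using vertex \<open>B \<in> GT n lam\<close> \<open>C \<in> GT n lam\<close>
    unfolding is_vertex_def by blast
qed

end

theorem mainTheorem3:
  fixes n :: nat and lam :: "nat \<Rightarrow> int" and A :: "nat \<Rightarrow> nat \<Rightarrow> real"
  assumes regular: "\<forall>j. 1 \<le> j \<and> j < n \<longrightarrow> lam j > lam (j + 1)"
    and inGT: "A \<in> GT n lam"
    and integral: "\<forall>i j. A i j \<in> \<int>"
  shows "is_vertex (GT n lam) A \<longleftrightarrow>
    (\<forall>i j. 1 \<le> i \<and> i \<le> n - 1 \<and> 1 \<le> j \<and> j \<le> n - i \<longrightarrow>
        A i j = A (i - 1) j \<or> A i j = A (i - 1) (j + 1))"
proof
  assume vertex: "is_vertex (GT n lam) A"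
  show "\<forall>i j. 1 \<le> i \<and> i \<le> n - 1 \<and> 1 \<le> j \<and> j \<le> n - i \<longrightarrow>
      A i j = A (i - 1) j \<or> A i j = A (i - 1) (j + 1)"
  proof (intro allI impI)
    fix i j assume ij: "1 \<le> i \<and> i \<le> n - 1 \<and> 1 \<le> j \<and> j \<le> n - i"
    then have "i - 1 + 2 \<le> n \<and> 1 \<le> j \<and> j + 1 \<le> n - (i - 1)" by auto
    then have "A (i - 1 + 1) j \<le> A (i - 1) j \<and> A (i - 1) (j + 1) \<le> A (i - 1 + 1) j"
      using inGT unfolding GT_def by blast
    then have bounds: "A i j \<le> A (i - 1) j" "A (i - 1) (j + 1) \<le> A i j"
      using ij by auto
    show "A i j = A (i - 1) j \<or> A i j = A (i - 1) (j + 1)"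
    proof (rule ccontr)
      assume "\<not> (A i j = A (i - 1) j \<or> A i j = A (i - 1) (j + 1))"
      with bounds have "A i j < A (i - 1) j" "A (i - 1) (j + 1) < A i j" by auto
      with not_is_vertex_GT_if_strict[OF inGT] ij integral vertex show False by blast
    qed
  qed
qed (rule is_vertex_GT_if_tight[OF inGT])

end
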